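(* Let $p$ be a stochastic choice function on $X$ and $M\in\mathcal N$. (a) There exists an MSC $\langle Q,\nu\rangle$ rationalizing $p$ such that $Q(M)$ is pairwise comparable if and only if $p(\cdot,M)$ is bounded in a cycle over every pair $(i,j)$ of distinct elements of $M$. (b) There exists an MSC $\langle Q,\nu\rangle$ rationalizing $p$ such that $Q(M)$ is fully comparable if and only if $p(i,M)>0$ for all $i\in M$, $p(i,\{i,j\})>0$ for all $i,j\in M$, and $p(\cdot,M)$ is bounded in a cycle over every pair $(i,j)$ of distinct elements of $M$.
   Context: $X$ is a finite set of alternatives; a menu is a nonempty subset of $X$, and $\mathcal N$ denotes the set of all menus. A stochastic choice function is a map $p:X\times\mathcal N\to[0,1]$ with $\sum_{i\in M}p(i,M)=1$ and $p(i,M)=0$ for $i\notin M$; $p(\cdot,M)$ denotes the row vector $(p(i,M))_{i\in M}$. For $M\in\mathcal N$ and $i,j\in M$ let $\delta_{ij}(M)=p(i,M)\,p(j,\{i,j\})-p(i,\{i,j\})\,p(j,M)$. An MSC (Markov stochastic choice model) $\langle Q,\nu\rangle$ consists of, for every menu $M$, a matrix $Q(M)=(q_{ij}(M))_{i,j\in M}$ with nonnegative entries and a probability distribution $\nu_M$ on $M$, such that for all $M\in\mathcal N$ and distinct $i,j\in M$: (A1) $q_{ii}(M)=1-\sum_{k\neq i}q_{ik}(M)>0$; (A2) if $q_{ij}(\{i,j\})=0$ then $q_{ji}(\{i,j\})>0$; (A3) $q_{ij}(\{i,j\})\,q_{ji}(M)=q_{ji}(\{i,j\})\,q_{ij}(M)$.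 For a right stochastic matrix $Q$ on $M$ and a distribution $\nu$ on $M$ define $\rho(\nu,Q)=\lim_{\alpha\to0^+}\sum_{t\ge0}\alpha(1-\alpha)^t\nu Q^t$ (the limit exists and satisfies $\rho(\nu,Q)(I-Q)=0$). $p$ is rationalized by the MSC $\langle Q,\nu\rangle$ if $p(\cdot,M)=\rho(\nu_M,Q(M))$ for every $M\in\mathcal N$. $Q(M)$ is pairwise comparable if for all distinct $i,j\in M$, $q_{ij}(M)=0$ implies $q_{ji}(M)>0$; it is fully comparable if $q_{ij}(M)>0$ for all distinct $i,j\in M$. A cycle on a set $M'=\{i_1,\dots,i_n\}$ (distinct elements in some order) is the set of ordered pairs $\{(i_1,i_2),\dots,(i_{n-1},i_n),(i_n,i_1)\}$. $p(\cdot,M)$ is bounded in a cycle over the pair $(i,j)$ if either $\delta_{ij}(M)=0$, or there exist $M'\subseteq M$ and a cycle on $M'$ containing $(i,j)$ such that all $\delta_{kl}(M)$, $(k,l)$ in the cycle, are strictly positive, or all are strictly negative. *)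

theory Defs
  imports "HOL-Analysis.Analysis"
begin

definition menu :: "'a set \<Rightarrow> 'a set \<Rightarrow> bool" where
  "menu X M \<longleftrightarrow> M \<subseteq> X \<and> M \<noteq> {}"

definition stoch_choice :: "'a set \<Rightarrow> ('a \<Rightarrow> 'a set \<Rightarrow> real) \<Rightarrow> bool" where
  "stoch_choice X p \<longleftrightarrow>
     (\<forall>M. menu X M \<longrightarrow>
        (\<forall>i\<in>X. 0 \<le> p i M \<and> p i M \<le> 1) \<and>
        (\<Sum>i\<in>M. p i M) = 1 \<and>
        (\<forall>i\<in>X. i \<notin> M \<longrightarrow> p i M = 0))"

definition delta :: "('a \<Rightarrow> 'a set \<Rightarrow> real) \<Rightarrow> 'a set \<Rightarrow> 'a \<Rightarrow> 'a \<Rightarrow> real" where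
  "delta p M i j = p i M * p j {i, j} - p i {i, j} * p j M"

fun mat_pow :: "'a set \<Rightarrow> ('a \<Rightarrow> 'a \<Rightarrow> real) \<Rightarrow> nat \<Rightarrow> 'a \<Rightarrow> 'a \<Rightarrow> real" where
  "mat_pow M Q 0 i j = (if i = j then 1 else 0)"
| "mat_pow M Q (Suc t) i j = (\<Sum>k\<in>M. mat_pow M Q t i k * Q k j)"

definition vec_pow :: "'a set \<Rightarrow> ('a \<Rightarrow> real) \<Rightarrow> ('a \<Rightarrow> 'a \<Rightarrow> real) \<Rightarrow> nat \<Rightarrow> 'a \<Rightarrow> real" where
  "vec_pow M \<nu> Q t j = (\<Sum>i\<in>M. \<nu> i * mat_pow M Q t i j)"

definition rho_is :: "'a set \<Rightarrow> ('a \<Rightarrow> real) \<Rightarrow> ('a \<Rightarrow> 'a \<Rightarrow> real) \<Rightarrow> ('a \<Rightarrow> real) \<Rightarrow> bool" where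
  "rho_is M \<nu> Q r \<longleftrightarrow>
     (\<forall>j\<in>M. ((\<lambda>\<alpha>. \<Sum>t. \<alpha> * (1 - \<alpha>) ^ t * vec_pow M \<nu> Q t j) \<longlongrightarrow> r j) (at_right 0))"

definition MSC :: "'a set \<Rightarrow> ('a set \<Rightarrow> 'a \<Rightarrow> 'a \<Rightarrow> real) \<Rightarrow> ('a set \<Rightarrow> 'a \<Rightarrow> real) \<Rightarrow> bool" where
  "MSC X Q \<nu> \<longleftrightarrow>
     (\<forall>M. menu X M \<longrightarrow>
        (\<forall>i\<in>M. \<forall>j\<in>M. 0 \<le> Q M i j) \<and>
        (\<forall>i\<in>M. 0 \<le> \<nu> M i) \<and> (\<Sum>i\<in>M. \<nu> M i) = 1 \<and>
        (\<forall>i\<in>M. Q M i i = 1 - (\<Sum>k\<in>M - {i}. Q M i k) \<and> Q M i i > 0) \<and>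
        (\<forall>i\<in>M. \<forall>j\<in>M. i \<noteq> j \<longrightarrow>
           (Q {i, j} i j = 0 \<longrightarrow> Q {i, j} j i > 0) \<and>
           Q {i, j} i j * Q M j i = Q {i, j} j i * Q M i j))"

definition rationalizes :: "'a set \<Rightarrow> ('a set \<Rightarrow> 'a \<Rightarrow> 'a \<Rightarrow> real) \<Rightarrow> ('a set \<Rightarrow> 'a \<Rightarrow> real)
    \<Rightarrow> ('a \<Rightarrow> 'a set \<Rightarrow> real) \<Rightarrow> bool" where
  "rationalizes X Q \<nu> p \<longleftrightarrow> (\<forall>M. menu X M \<longrightarrow> rho_is M (\<nu> M) (Q M) (\<lambda>i. p i M))"

definition pairwise_comparable :: "'a set \<Rightarrow> ('a \<Rightarrow> 'a \<Rightarrow> real) \<Rightarrow> bool" where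
  "pairwise_comparable M Q \<longleftrightarrow> (\<forall>i\<in>M. \<forall>j\<in>M. i \<noteq> j \<longrightarrow> Q i j = 0 \<longrightarrow> Q j i > 0)"

definition fully_comparable :: "'a set \<Rightarrow> ('a \<Rightarrow> 'a \<Rightarrow> real) \<Rightarrow> bool" where
  "fully_comparable M Q \<longleftrightarrow> (\<forall>i\<in>M. \<forall>j\<in>M. i \<noteq> j \<longrightarrow> Q i j > 0)"

text \<open>C is a cycle on M': M' = {i1,...,in} listed as distinct xs,
  C = {(i1,i2),...,(i(n-1),in),(in,i1)}.\<close>
definition is_cycle_on :: "'a set \<Rightarrow> ('a \<times> 'a) set \<Rightarrow> bool" where
  "is_cycle_on M' C \<longleftrightarrow> (\<exists>xs. distinct xs \<and> set xs = M' \<and> C = set (zip xs (rotate1 xs)))"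

definition bounded_in_cycle :: "('a \<Rightarrow> 'a set \<Rightarrow> real) \<Rightarrow> 'a set \<Rightarrow> 'a \<Rightarrow> 'a \<Rightarrow> bool" where
  "bounded_in_cycle p M i j \<longleftrightarrow>
     delta p M i j = 0 \<or>
     (\<exists>M' C. M' \<subseteq> M \<and> is_cycle_on M' C \<and> (i, j) \<in> C \<and>
        ((\<forall>(k, l)\<in>C. delta p M k l > 0) \<or> (\<forall>(k, l)\<in>C. delta p M k l < 0)))"

end

theory Submission
  imports Defs "HOL-Library.Transitive_Closure_Table"
begin

(* If p is rationalized by an MSC, stationarity of p(.,{i,j}) for Q({i,j}) together with the
   consistency axiom (A3) gives detailed balance p(j,{i,j}) q_ji(M) = p(i,{i,j}) q_ij(M). With the
   symmetric weights w_kl = q_kl(M) + q_lk(M), the products w_kl delta_kl(M) are therefore the net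
   probability flows of Q(M), and stationarity of p(.,M) says that they form a circulation. If Q(M)
   is pairwise comparable, w is positive off the diagonal, and in a circulation with positive
   weights every edge with nonzero flow lies on a cycle along which delta keeps its sign: otherwise
   the set of alternatives reachable from the head of the edge along positive edges would have a
   positive net inflow. Full comparability additionally forces p(i,M) > 0 through stationarity and
   p(i,{i,j}) > 0 through detailed balance.

   Conversely, the unit circulations around sign-constant cycles add up to symmetric positive
   weights w with sum_k w_kl delta_kl(M) = 0, and the chain on M that proposes j from i at rate
   c w_ij and accepts with probability p(j,{i,j}) has p(.,M) as a stationary distribution. *)

section \<open>Cycles and circulations\<close>

definition cycle_edges :: "'a list \<Rightarrow> ('a \<times> 'a) set" where
  "cycle_edges xs = set (zip xs (rotate1 xs))"

lemma cycle_edges_subset: "(a, b) \<in> cycle_edges xs \<Longrightarrow> a \<in> set xs \<and> b \<in> set xs"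
  by (auto simp: cycle_edges_def dest: set_zip_leftD set_zip_rightD)

lemma card_zip_left_of:
  "length xs = length ys \<Longrightarrow> distinct ys \<Longrightarrow>
   card {a. (a, j) \<in> set (zip xs ys)} = (if j \<in> set ys then 1 else 0)"
proof (induction xs ys rule: list_induct2)
  case (Cons x xs y ys)
  have "{a. (a, j) \<in> set (zip (x # xs) (y # ys))} =
        (if y = j then {x} else {}) \<union> {a. (a, j) \<in> set (zip xs ys)}" by auto
  moreover have "y = j \<Longrightarrow> {a. (a, j) \<in> set (zip xs ys)} = {}"
    using Cons.prems by (auto dest: set_zip_rightD)
  ultimately show ?case using Cons by auto
qed simp

lemma card_zip_right_of:
  "length xs = length ys \<Longrightarrow> distinct xs \<Longrightarrow>
   card {b. (j, b) \<in> set (zip xs ys)} = (if j \<in> set xs then 1 else 0)"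
proof (induction xs ys rule: list_induct2)
  case (Cons x xs y ys)
  have "{b. (j, b) \<in> set (zip (x # xs) (y # ys))} =
        (if x = j then {y} else {}) \<union> {b. (j, b) \<in> set (zip xs ys)}" by auto
  moreover have "x = j \<Longrightarrow> {b. (j, b) \<in> set (zip xs ys)} = {}"
    using Cons.prems by (auto dest: set_zip_leftD)
  ultimately show ?case using Cons by auto
qed simp

lemma card_cycle_edges_in_eq_out:
  assumes "distinct xs"
  shows "card {a. (a, j) \<in> cycle_edges xs} = card {b. (j, b) \<in> cycle_edges xs}"
  using assms card_zip_left_of[of xs "rotate1 xs" j] card_zip_right_of[of xs "rotate1 xs" j]
  by (simp add: cycle_edges_def)

lemma cycle_edges_path:
  assumes "rtrancl_path r j xs i" "xs \<noteq> []"
  shows "cycle_edges (j # xs) = set (zip (j # xs) xs) \<union> {(i, j)}"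
proof -
  have "zip (a # as) (as @ [b]) = zip (a # as) as @ [(last (a # as), b)]" for a :: 'a and as b
    by (induction as arbitrary: a) auto
  moreover have "last (j # xs) = i" using rtrancl_path_last[OF assms] assms(2) by simp
  ultimately show ?thesis by (simp add: cycle_edges_def)
qed

lemma rtrancl_path_edges: "rtrancl_path r x xs y \<Longrightarrow> \<forall>(a, b)\<in>set (zip (x # xs) xs). r a b"
  by (induction rule: rtrancl_path.induct) auto

lemma circulation_cut_flow_zero:
  fixes f :: "'a \<Rightarrow> 'a \<Rightarrow> real"
  assumes "finite M" "R \<subseteq> M"
    and antisym: "\<And>k l. k \<in> M \<Longrightarrow> l \<in> M \<Longrightarrow> f l k = - f k l"
    and balanced: "\<And>l. l \<in> M \<Longrightarrow> (\<Sum>k\<in>M. f k l) = 0"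
  shows "(\<Sum>l\<in>R. \<Sum>k\<in>M - R. f k l) = 0"
proof -
  have "(\<Sum>l\<in>R. \<Sum>k\<in>R. f k l) = (\<Sum>k\<in>R. \<Sum>l\<in>R. f k l)" by (rule sum.swap)
  also have "\<dots> = (\<Sum>k\<in>R. \<Sum>l\<in>R. - f l k)"
    using antisym \<open>R \<subseteq> M\<close> by (intro sum.cong) auto
  also have "\<dots> = - (\<Sum>l\<in>R. \<Sum>k\<in>R. f k l)" by (simp add: sum_negf)
  finally have inner: "(\<Sum>l\<in>R. \<Sum>k\<in>R. f k l) = 0" by simp
  have "0 = (\<Sum>l\<in>R. \<Sum>k\<in>M. f k l)" using balanced \<open>R \<subseteq> M\<close> by (simp add: subset_eq)
  also have "\<dots> = (\<Sum>l\<in>R. \<Sum>k\<in>R. f k l) + (\<Sum>l\<in>R. \<Sum>k\<in>M - R. f k l)"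
  proof -
    have "(\<Sum>k\<in>M. f k l) = (\<Sum>k\<in>R. f k l) + (\<Sum>k\<in>M - R. f k l)" for l
      using sum.subset_diff[OF assms(2,1)] by (simp add: add.commute)
    thus ?thesis by (simp add: sum.distrib)
  qed
  finally show ?thesis using inner by simp
qed

lemma circulation_positive_edge_reaches_back:
  fixes d w :: "'a \<Rightarrow> 'a \<Rightarrow> real"
  assumes "finite M"
    and antisym: "\<And>k l. k \<in> M \<Longrightarrow> l \<in> M \<Longrightarrow> d l k = - d k l"
    and w_sym: "\<And>k l. k \<in> M \<Longrightarrow> l \<in> M \<Longrightarrow> w l k = w k l"
    and w_nonneg: "\<And>k l. k \<in> M \<Longrightarrow> l \<in> M \<Longrightarrow> 0 \<le> w k l"
    and circulation: "\<And>l. l \<in> M \<Longrightarrow> (\<Sum>k\<in>M. w k l * d k l) = 0"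
    and ij: "i \<in> M" "j \<in> M" "0 < d i j" "0 < w i j"
  shows "(\<lambda>k l. k \<in> M \<and> l \<in> M \<and> 0 < d k l)\<^sup>*\<^sup>* j i"
proof (rule ccontr)
  define r where "r = (\<lambda>k l. k \<in> M \<and> l \<in> M \<and> 0 < d k l)"
  define R where "R = {l. r\<^sup>*\<^sup>* j l}"
  assume "\<not> r\<^sup>*\<^sup>* j i"
  hence "i \<in> M - R" using ij by (simp add: R_def r_def)
  have "R \<subseteq> M"
  proof
    fix l assume "l \<in> R"
    hence "r\<^sup>*\<^sup>* j l" by (simp add: R_def)
    thus "l \<in> M" using ij(2) by (induction rule: rtranclp_induct) (auto simp: r_def)
  qed
  have j: "j \<in> R" by (simp add: R_def)
  have inflow_nonneg: "0 \<le> w k l * d k l" if "l \<in> R" "k \<in> M - R" for k l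
  proof -
    have kl: "k \<in> M" "l \<in> M" using that \<open>R \<subseteq> M\<close> by auto
    have "\<not> r l k" using that by (auto simp: R_def intro: rtranclp.rtrancl_into_rtrancl)
    hence "0 \<le> d k l" using antisym[OF kl] kl by (auto simp: r_def)
    thus ?thesis using w_nonneg[OF kl] by simp
  qed
  have edge_flow: "0 < (\<Sum>k\<in>M - R. w k j * d k j)"
    using \<open>i \<in> M - R\<close> \<open>finite M\<close> ij inflow_nonneg[OF j] by (intro sum_pos2[of _ i]) auto
  have "0 < (\<Sum>l\<in>R. \<Sum>k\<in>M - R. w k l * d k l)"
  proof (rule sum_pos2[OF _ j])
    show "finite R" using \<open>R \<subseteq> M\<close> \<open>finite M\<close> by (rule finite_subset)
    show "0 \<le> (\<Sum>k\<in>M - R. w k l * d k l)" if "l \<in> R" for l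
      using inflow_nonneg[OF that] by (rule sum_nonneg)
  qed (fact edge_flow)
  moreover have "(\<Sum>l\<in>R. \<Sum>k\<in>M - R. w k l * d k l) = 0"
  proof (rule circulation_cut_flow_zero[OF \<open>finite M\<close> \<open>R \<subseteq> M\<close>])
    show "w l k * d l k = - (w k l * d k l)" if "k \<in> M" "l \<in> M" for k l
      using antisym[OF that] w_sym[OF that] by simp
  qed (fact circulation)
  ultimately show False by simp
qed

lemma circulation_positive_edge_on_positive_cycle:
  fixes d w :: "'a \<Rightarrow> 'a \<Rightarrow> real"
  assumes "finite M"
    and antisym: "\<And>k l. k \<in> M \<Longrightarrow> l \<in> M \<Longrightarrow> d l k = - d k l"
    and w_sym: "\<And>k l. k \<in> M \<Longrightarrow> l \<in> M \<Longrightarrow> w l k = w k l"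
    and w_nonneg: "\<And>k l. k \<in> M \<Longrightarrow> l \<in> M \<Longrightarrow> 0 \<le> w k l"
    and circulation: "\<And>l. l \<in> M \<Longrightarrow> (\<Sum>k\<in>M. w k l * d k l) = 0"
    and ij: "i \<in> M" "j \<in> M" "0 < d i j" "0 < w i j"
  shows "\<exists>xs. distinct xs \<and> set xs \<subseteq> M \<and> (i, j) \<in> cycle_edges xs \<and>
             (\<forall>(k, l)\<in>cycle_edges xs. 0 < d k l)"
proof -
  define r where "r = (\<lambda>k l. k \<in> M \<and> l \<in> M \<and> 0 < d k l)"
  have "r\<^sup>*\<^sup>* j i"
    unfolding r_def by (rule circulation_positive_edge_reaches_back[OF assms])
  then obtain ys where "rtrancl_path r j ys i" by (auto simp: rtranclp_eq_rtrancl_path)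
  then obtain xs where path: "rtrancl_path r j xs i" and "distinct (j # xs)"
    by (rule rtrancl_path_distinct)
  have "i \<noteq> j" using ij(3) antisym[OF ij(1,1)] by auto
  hence "xs \<noteq> []" using path by (auto elim: rtrancl_path.cases)
  have "set (j # xs) \<subseteq> M" using ij(2) rtrancl_path_Range[OF path] by (auto simp: r_def)
  moreover have "\<forall>(k, l)\<in>cycle_edges (j # xs). 0 < d k l"
    using cycle_edges_path[OF path \<open>xs \<noteq> []\<close>] rtrancl_path_edges[OF path] ij(3)
    by (auto simp: r_def)
  ultimately show ?thesis
    using \<open>distinct (j # xs)\<close> cycle_edges_path[OF path \<open>xs \<noteq> []\<close>] by blast
qed

definition sign_constant_cycle :: "'a set \<Rightarrow> ('a \<Rightarrow> 'a \<Rightarrow> real) \<Rightarrow> 'a list \<Rightarrow> bool" where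
  "sign_constant_cycle M d xs \<longleftrightarrow> distinct xs \<and> set xs \<subseteq> M \<and>
     ((\<forall>(k, l)\<in>cycle_edges xs. 0 < d k l) \<or> (\<forall>(k, l)\<in>cycle_edges xs. d k l < 0))"

lemma circulation_edge_on_sign_constant_cycle:
  fixes d w :: "'a \<Rightarrow> 'a \<Rightarrow> real"
  assumes "finite M"
    and antisym: "\<And>k l. k \<in> M \<Longrightarrow> l \<in> M \<Longrightarrow> d l k = - d k l"
    and w_sym: "\<And>k l. k \<in> M \<Longrightarrow> l \<in> M \<Longrightarrow> w l k = w k l"
    and w_nonneg: "\<And>k l. k \<in> M \<Longrightarrow> l \<in> M \<Longrightarrow> 0 \<le> w k l"
    and circulation: "\<And>l. l \<in> M \<Longrightarrow> (\<Sum>k\<in>M. w k l * d k l) = 0"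
    and ij: "i \<in> M" "j \<in> M" "d i j \<noteq> 0" "0 < w i j"
  shows "\<exists>xs. sign_constant_cycle M d xs \<and> (i, j) \<in> cycle_edges xs"
proof (cases "0 < d i j")
  case True
  show ?thesis
    using circulation_positive_edge_on_positive_cycle[OF assms(1-5) ij(1,2) True ij(4)]
    by (auto simp: sign_constant_cycle_def)
next
  case False
  have "\<exists>xs. distinct xs \<and> set xs \<subseteq> M \<and> (i, j) \<in> cycle_edges xs \<and>
             (\<forall>(k, l)\<in>cycle_edges xs. 0 < - d k l)"
  proof (rule circulation_positive_edge_on_positive_cycle[OF assms(1) _ w_sym w_nonneg _ ij(1,2) _ ij(4)])
    show "- d l k = - (- d k l)" if "k \<in> M" "l \<in> M" for k l using antisym[OF that] by simp
    show "(\<Sum>k\<in>M. w k l * - d k l) = 0" if "l \<in> M" for l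
      using circulation[OF that] by (simp add: sum_negf)
    show "0 < - d i j" using False ij(3) by simp
  qed
  thus ?thesis by (auto simp: sign_constant_cycle_def)
qed

text \<open>On a cycle along which d is positive, cycle_weight d xs k l * d k l is 1 on its edges and
  -1 on the reversed edges: a unit circulation.\<close>

definition cycle_weight :: "('a \<Rightarrow> 'a \<Rightarrow> real) \<Rightarrow> 'a list \<Rightarrow> 'a \<Rightarrow> 'a \<Rightarrow> real" where
  "cycle_weight d xs k l =
     (if (k, l) \<in> cycle_edges xs \<or> (l, k) \<in> cycle_edges xs then 1 / \<bar>d k l\<bar> else 0)"

lemma cycle_weight_nonneg: "0 \<le> cycle_weight d xs k l"
  by (simp add: cycle_weight_def)

lemma cycle_weight_sym:
  "d l k = - d k l \<Longrightarrow> cycle_weight d xs l k = cycle_weight d xs k l"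
  by (auto simp: cycle_weight_def)

lemma cycle_weight_uminus: "cycle_weight (\<lambda>k l. - d k l) xs = cycle_weight d xs"
  by (simp add: cycle_weight_def fun_eq_iff)

lemma cycle_weight_circulation_positive:
  fixes d :: "'a \<Rightarrow> 'a \<Rightarrow> real"
  assumes "finite M" and antisym: "\<And>k l. k \<in> M \<Longrightarrow> l \<in> M \<Longrightarrow> d l k = - d k l"
    and "distinct xs" "set xs \<subseteq> M" and positive: "\<forall>(k, l)\<in>cycle_edges xs. 0 < d k l"
    and "j \<in> M"
  shows "(\<Sum>k\<in>M. cycle_weight d xs k j * d k j) = 0"
proof -
  let ?C = "cycle_edges xs"
  have edge_term: "cycle_weight d xs k j * d k j = of_bool ((k, j) \<in> ?C) - of_bool ((j, k) \<in> ?C)"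
    if "k \<in> M" for k
  proof -
    have kj: "(k, j) \<in> ?C \<Longrightarrow> 0 < d k j" and jk: "(j, k) \<in> ?C \<Longrightarrow> d k j < 0"
      using positive antisym[OF that \<open>j \<in> M\<close>] by auto
    show ?thesis
      by (cases "(k, j) \<in> ?C"; cases "(j, k) \<in> ?C") (use kj jk in \<open>auto simp: cycle_weight_def\<close>)
  qed
  have in_M: "M \<inter> {k. (k, j) \<in> ?C} = {k. (k, j) \<in> ?C}" "M \<inter> {k. (j, k) \<in> ?C} = {k. (j, k) \<in> ?C}"
    using \<open>set xs \<subseteq> M\<close> by (auto dest: cycle_edges_subset)
  have "(\<Sum>k\<in>M. cycle_weight d xs k j * d k j) =
        (\<Sum>k\<in>M. of_bool ((k, j) \<in> ?C)) - (\<Sum>k\<in>M. of_bool ((j, k) \<in> ?C))"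
    by (simp add: edge_term sum_subtractf)
  also have "\<dots> = 0"
    using \<open>finite M\<close> card_cycle_edges_in_eq_out[OF \<open>distinct xs\<close>, of j] by (simp add: in_M)
  finally show ?thesis .
qed

lemma cycle_weight_circulation:
  fixes d :: "'a \<Rightarrow> 'a \<Rightarrow> real"
  assumes "finite M" and antisym: "\<And>k l. k \<in> M \<Longrightarrow> l \<in> M \<Longrightarrow> d l k = - d k l"
    and "sign_constant_cycle M d xs" and "j \<in> M"
  shows "(\<Sum>k\<in>M. cycle_weight d xs k j * d k j) = 0"
proof -
  have "distinct xs" "set xs \<subseteq> M" using assms(3) by (auto simp: sign_constant_cycle_def)
  consider "\<forall>(k, l)\<in>cycle_edges xs. 0 < d k l" | "\<forall>(k, l)\<in>cycle_edges xs. 0 < - d k l"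
    using assms(3) by (auto simp: sign_constant_cycle_def)
  thus ?thesis
  proof cases
    case 1
    show ?thesis
      by (rule cycle_weight_circulation_positive[OF assms(1,2) \<open>distinct xs\<close> \<open>set xs \<subseteq> M\<close> 1 assms(4)])
  next
    case 2
    have "(\<Sum>k\<in>M. cycle_weight (\<lambda>k l. - d k l) xs k j * - d k j) = 0"
    proof (rule cycle_weight_circulation_positive[OF assms(1) _ \<open>distinct xs\<close> \<open>set xs \<subseteq> M\<close> 2 assms(4)])
      show "- d l k = - (- d k l)" if "k \<in> M" "l \<in> M" for k l using antisym[OF that] by simp
    qed
    thus ?thesis by (simp add: cycle_weight_uminus sum_negf)
  qed
qed

text \<open>The weight is the sum of the unit circulations of chosen sign-constant cycles through the
  edges with nonzero d, plus 1 on the edges where d vanishes.\<close>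

lemma exists_positive_circulation_weights:
  fixes d :: "'a \<Rightarrow> 'a \<Rightarrow> real"
  assumes "finite M" and antisym: "\<And>k l. k \<in> M \<Longrightarrow> l \<in> M \<Longrightarrow> d l k = - d k l"
    and cycles: "\<And>a b. a \<in> M \<Longrightarrow> b \<in> M \<Longrightarrow> d a b \<noteq> 0 \<Longrightarrow>
                   \<exists>xs. sign_constant_cycle M d xs \<and> (a, b) \<in> cycle_edges xs"
  shows "\<exists>w. (\<forall>k\<in>M. \<forall>l\<in>M. w l k = w k l \<and> 0 \<le> w k l \<and> (k \<noteq> l \<longrightarrow> 0 < w k l)) \<and>
             (\<forall>l\<in>M. (\<Sum>k\<in>M. w k l * d k l) = 0)"
proof -
  define P where "P = {(a, b) \<in> M \<times> M. d a b \<noteq> 0}"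
  have "\<forall>e\<in>P. \<exists>xs. sign_constant_cycle M d xs \<and> e \<in> cycle_edges xs"
    using cycles by (auto simp: P_def)
  then obtain cyc where cyc: "\<forall>e\<in>P. sign_constant_cycle M d (cyc e) \<and> e \<in> cycle_edges (cyc e)"
    by (rule bchoice[THEN exE])
  have "finite P" unfolding P_def using \<open>finite M\<close> by (auto intro: finite_subset[of _ "M \<times> M"])
  define w where "w k l = of_bool (d k l = 0) + (\<Sum>e\<in>P. cycle_weight d (cyc e) k l)" for k l
  show ?thesis
  proof (intro exI[of _ w] conjI ballI impI)
    fix k l assume kl: "k \<in> M" "l \<in> M"
    show "w l k = w k l" using antisym[OF kl] cycle_weight_sym[of d l k, OF antisym[OF kl]] by (simp add: w_def)
    show "0 \<le> w k l" by (simp add: w_def cycle_weight_nonneg sum_nonneg)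
    show "0 < w k l" if "k \<noteq> l"
    proof (cases "d k l = 0")
      case True thus ?thesis by (simp add: w_def cycle_weight_nonneg sum_nonneg add_pos_nonneg)
    next
      case False
      hence "(k, l) \<in> P" using kl by (simp add: P_def)
      hence "0 < cycle_weight d (cyc (k, l)) k l"
        using cyc False by (simp add: cycle_weight_def)
      also have "\<dots> \<le> (\<Sum>e\<in>P. cycle_weight d (cyc e) k l)"
        using \<open>finite P\<close> \<open>(k, l) \<in> P\<close> by (intro member_le_sum cycle_weight_nonneg)
      finally show ?thesis by (simp add: w_def)
    qed
  next
    fix l assume "l \<in> M"
    have "w k l * d k l = (\<Sum>e\<in>P. cycle_weight d (cyc e) k l * d k l)" for k
      by (simp add: w_def distrib_right sum_distrib_right)
    hence "(\<Sum>k\<in>M. w k l * d k l) = (\<Sum>e\<in>P. \<Sum>k\<in>M. cycle_weight d (cyc e) k l * d k l)"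
      by (simp add: sum.swap[of _ M P])
    also have "\<dots> = 0"
      using cycle_weight_circulation[of M d, OF \<open>finite M\<close> antisym _ \<open>l \<in> M\<close>] cyc by simp
    finally show "(\<Sum>k\<in>M. w k l * d k l) = 0" .
  qed
qed

section \<open>Abel limits of Markov chains\<close>

lemma vec_pow_0: "finite M \<Longrightarrow> j \<in> M \<Longrightarrow> vec_pow M \<nu> Q 0 j = \<nu> j"
  by (simp add: vec_pow_def if_distrib cong: if_cong)

lemma vec_pow_Suc:
  assumes "finite M"
  shows "vec_pow M \<nu> Q (Suc t) j = (\<Sum>k\<in>M. vec_pow M \<nu> Q t k * Q k j)"
proof -
  have "vec_pow M \<nu> Q (Suc t) j = (\<Sum>i\<in>M. \<Sum>k\<in>M. \<nu> i * mat_pow M Q t i k * Q k j)"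
    by (simp add: vec_pow_def sum_distrib_left mult.assoc)
  also have "\<dots> = (\<Sum>k\<in>M. \<Sum>i\<in>M. \<nu> i * mat_pow M Q t i k * Q k j)" by (rule sum.swap)
  also have "\<dots> = (\<Sum>k\<in>M. vec_pow M \<nu> Q t k * Q k j)"
    by (simp add: vec_pow_def sum_distrib_right)
  finally show ?thesis .
qed

lemma mat_pow_stochastic:
  assumes "finite M" and Q_nonneg: "\<And>i j. i \<in> M \<Longrightarrow> j \<in> M \<Longrightarrow> 0 \<le> Q i j"
    and Q_row: "\<And>i. i \<in> M \<Longrightarrow> (\<Sum>j\<in>M. Q i j) = 1" and "i \<in> M"
  shows "(\<forall>j\<in>M. 0 \<le> mat_pow M Q t i j) \<and> (\<Sum>j\<in>M. mat_pow M Q t i j) = 1"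
proof (induction t)
  case 0 thus ?case using assms(1,4) by simp
next
  case (Suc t)
  have "(\<Sum>j\<in>M. mat_pow M Q (Suc t) i j) = (\<Sum>j\<in>M. \<Sum>k\<in>M. mat_pow M Q t i k * Q k j)"
    by simp
  also have "\<dots> = (\<Sum>k\<in>M. \<Sum>j\<in>M. mat_pow M Q t i k * Q k j)" by (rule sum.swap)
  also have "\<dots> = 1" using Suc by (simp add: sum_distrib_left[symmetric] Q_row)
  finally show ?case using Suc Q_nonneg by (auto intro!: sum_nonneg)
qed

lemma vec_pow_bounds:
  assumes "finite M" and Q_nonneg: "\<And>i j. i \<in> M \<Longrightarrow> j \<in> M \<Longrightarrow> 0 \<le> Q i j"
    and Q_row: "\<And>i. i \<in> M \<Longrightarrow> (\<Sum>j\<in>M. Q i j) = 1"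
    and \<nu>_nonneg: "\<And>i. i \<in> M \<Longrightarrow> 0 \<le> \<nu> i" and \<nu>_sum: "(\<Sum>i\<in>M. \<nu> i) = 1"
    and "k \<in> M"
  shows "0 \<le> vec_pow M \<nu> Q t k \<and> vec_pow M \<nu> Q t k \<le> 1"
proof -
  have entry: "0 \<le> mat_pow M Q t i k \<and> mat_pow M Q t i k \<le> 1" if "i \<in> M" for i
  proof -
    note row = mat_pow_stochastic[OF assms(1) Q_nonneg Q_row that, where t=t]
    have "mat_pow M Q t i k \<le> (\<Sum>j\<in>M. mat_pow M Q t i j)"
      using row \<open>k \<in> M\<close> \<open>finite M\<close> by (intro member_le_sum) auto
    thus ?thesis using row \<open>k \<in> M\<close> by auto
  qed
  have "vec_pow M \<nu> Q t k \<le> (\<Sum>i\<in>M. \<nu> i * 1)" unfolding vec_pow_def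
    using entry \<nu>_nonneg by (intro sum_mono mult_left_mono) auto
  moreover have "0 \<le> vec_pow M \<nu> Q t k" unfolding vec_pow_def
    using entry \<nu>_nonneg by (intro sum_nonneg) auto
  ultimately show ?thesis using \<nu>_sum by simp
qed

definition abel_mean :: "'a set \<Rightarrow> ('a \<Rightarrow> real) \<Rightarrow> ('a \<Rightarrow> 'a \<Rightarrow> real) \<Rightarrow> 'a \<Rightarrow> real \<Rightarrow> real" where
  "abel_mean M \<nu> Q j \<alpha> = (\<Sum>t. \<alpha> * (1 - \<alpha>) ^ t * vec_pow M \<nu> Q t j)"

lemma rho_is_abel_mean: "rho_is M \<nu> Q r \<longleftrightarrow> (\<forall>j\<in>M. (abel_mean M \<nu> Q j \<longlongrightarrow> r j) (at_right 0))"
  by (simp add: rho_is_def abel_mean_def[abs_def])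

lemma eventually_at_right_0_lt_1: "\<forall>\<^sub>F \<alpha> in at_right (0::real). 0 < \<alpha> \<and> \<alpha> < 1"
  by (auto simp: eventually_at_right[of 0 1] intro!: exI[of _ 1])

lemma stationary_imp_rho_is:
  assumes "finite M" and stationary: "\<And>j. j \<in> M \<Longrightarrow> (\<Sum>k\<in>M. \<nu> k * Q k j) = \<nu> j"
  shows "rho_is M \<nu> Q \<nu>"
  unfolding rho_is_abel_mean
proof
  fix j assume "j \<in> M"
  have vec_pow_const: "vec_pow M \<nu> Q t j = \<nu> j" if "j \<in> M" for t j
    using that
  proof (induction t arbitrary: j)
    case 0 thus ?case using vec_pow_0[OF \<open>finite M\<close>] by simp
  next
    case (Suc t)
    thus ?case using stationary by (simp add: vec_pow_Suc[OF \<open>finite M\<close>])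
  qed
  have "\<forall>\<^sub>F \<alpha> in at_right 0. abel_mean M \<nu> Q j \<alpha> = \<nu> j"
    using eventually_at_right_0_lt_1
  proof eventually_elim
    case (elim \<alpha>)
    have "abel_mean M \<nu> Q j \<alpha> = (\<Sum>t. (\<alpha> * \<nu> j) * (1 - \<alpha>) ^ t)"
      using vec_pow_const[OF \<open>j \<in> M\<close>] by (simp add: abel_mean_def mult_ac)
    also have "\<dots> = (\<alpha> * \<nu> j) * (\<Sum>t. (1 - \<alpha>) ^ t)"
      using elim by (intro suminf_mult summable_geometric) auto
    also have "\<dots> = \<nu> j" using elim by (subst suminf_geometric) auto
    finally show ?case .
  qed
  thus "(abel_mean M \<nu> Q j \<longlongrightarrow> \<nu> j) (at_right 0)" by (rule tendsto_eventually)
qed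

text \<open>The Abel mean satisfies the resolvent equation A = \<alpha> \<nu> + (1 - \<alpha>) A Q;
  letting \<alpha> tend to 0 shows that its limit is stationary.\<close>

lemma abel_mean_resolvent:
  assumes "finite M" and Q_nonneg: "\<And>i j. i \<in> M \<Longrightarrow> j \<in> M \<Longrightarrow> 0 \<le> Q i j"
    and Q_row: "\<And>i. i \<in> M \<Longrightarrow> (\<Sum>j\<in>M. Q i j) = 1"
    and \<nu>_nonneg: "\<And>i. i \<in> M \<Longrightarrow> 0 \<le> \<nu> i" and \<nu>_sum: "(\<Sum>i\<in>M. \<nu> i) = 1"
    and "j \<in> M" "0 < \<alpha>" "\<alpha> < 1"
  shows "abel_mean M \<nu> Q j \<alpha> = \<alpha> * \<nu> j + (1 - \<alpha>) * (\<Sum>k\<in>M. abel_mean M \<nu> Q k \<alpha> * Q k j)"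
proof -
  let ?a = "\<lambda>t k. \<alpha> * (1 - \<alpha>) ^ t * vec_pow M \<nu> Q t k"
  have summable: "summable (\<lambda>t. ?a t k)" if "k \<in> M" for k
  proof (rule summable_comparison_test[of _ "\<lambda>t. \<alpha> * (1 - \<alpha>) ^ t"])
    show "summable (\<lambda>t. \<alpha> * (1 - \<alpha>) ^ t)"
      using assms(7,8) by (intro summable_mult summable_geometric) auto
    show "\<exists>N. \<forall>n\<ge>N. norm (?a n k) \<le> \<alpha> * (1 - \<alpha>) ^ n"
      using vec_pow_bounds[OF assms(1-5) that] assms(7,8)
      by (auto simp: abs_mult intro!: mult_left_le)
  qed
  have "(\<Sum>t. ?a (Suc t) j) = (\<Sum>t. (1 - \<alpha>) * (\<Sum>k\<in>M. ?a t k * Q k j))"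
    unfolding vec_pow_Suc[OF \<open>finite M\<close>] by (simp add: sum_distrib_left mult_ac)
  also have "\<dots> = (1 - \<alpha>) * (\<Sum>t. \<Sum>k\<in>M. ?a t k * Q k j)"
    using summable by (intro suminf_mult summable_sum summable_mult2) auto
  also have "\<dots> = (1 - \<alpha>) * (\<Sum>k\<in>M. \<Sum>t. ?a t k * Q k j)"
    using summable by (subst suminf_sum) (auto intro: summable_mult2)
  also have "\<dots> = (1 - \<alpha>) * (\<Sum>k\<in>M. abel_mean M \<nu> Q k \<alpha> * Q k j)"
    unfolding abel_mean_def using summable
    by (intro arg_cong[where f="\<lambda>x. (1 - \<alpha>) * x"] sum.cong refl suminf_mult2[symmetric]) auto
  finally have tail: "(\<Sum>t. ?a (Suc t) j) = (1 - \<alpha>) * (\<Sum>k\<in>M. abel_mean M \<nu> Q k \<alpha> * Q k j)" .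
  have "abel_mean M \<nu> Q j \<alpha> = (\<Sum>t. ?a (Suc t) j) + ?a 0 j"
    unfolding abel_mean_def using suminf_split_head[OF summable[OF \<open>j \<in> M\<close>]] by simp
  thus ?thesis using tail vec_pow_0[OF \<open>finite M\<close> \<open>j \<in> M\<close>] by simp
qed

lemma rho_is_imp_stationary:
  assumes "finite M" and Q_nonneg: "\<And>i j. i \<in> M \<Longrightarrow> j \<in> M \<Longrightarrow> 0 \<le> Q i j"
    and Q_row: "\<And>i. i \<in> M \<Longrightarrow> (\<Sum>j\<in>M. Q i j) = 1"
    and \<nu>_nonneg: "\<And>i. i \<in> M \<Longrightarrow> 0 \<le> \<nu> i" and \<nu>_sum: "(\<Sum>i\<in>M. \<nu> i) = 1"
    and rho: "rho_is M \<nu> Q r" and "j \<in> M"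
  shows "(\<Sum>k\<in>M. r k * Q k j) = r j"
proof -
  have lim: "(abel_mean M \<nu> Q k \<longlongrightarrow> r k) (at_right 0)" if "k \<in> M" for k
    using rho that by (simp add: rho_is_abel_mean)
  have "\<forall>\<^sub>F \<alpha> in at_right 0. \<alpha> * \<nu> j + (1 - \<alpha>) * (\<Sum>k\<in>M. abel_mean M \<nu> Q k \<alpha> * Q k j) =
                             abel_mean M \<nu> Q j \<alpha>"
    using eventually_at_right_0_lt_1
    by eventually_elim (rule abel_mean_resolvent[OF assms(1-5) \<open>j \<in> M\<close>, symmetric]; simp)
  moreover have "((\<lambda>\<alpha>. \<alpha> * \<nu> j + (1 - \<alpha>) * (\<Sum>k\<in>M. abel_mean M \<nu> Q k \<alpha> * Q k j)) \<longlongrightarrow>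
                   0 * \<nu> j + (1 - 0) * (\<Sum>k\<in>M. r k * Q k j)) (at_right 0)"
    by (intro tendsto_intros lim) auto
  ultimately have "(abel_mean M \<nu> Q j \<longlongrightarrow> (\<Sum>k\<in>M. r k * Q k j)) (at_right 0)"
    by (auto dest: tendsto_cong[THEN iffD1])
  from tendsto_unique[OF _ this lim[OF \<open>j \<in> M\<close>]] show ?thesis by simp
qed

section \<open>Necessity\<close>

lemma menu_finite: "finite X \<Longrightarrow> menu X N \<Longrightarrow> finite N"
  by (auto simp: menu_def intro: finite_subset)

lemma menu_pair: "menu X M \<Longrightarrow> i \<in> M \<Longrightarrow> j \<in> M \<Longrightarrow> menu X {i, j}"
  by (auto simp: menu_def)

lemma stoch_choice_nonneg: "stoch_choice X p \<Longrightarrow> menu X N \<Longrightarrow> i \<in> X \<Longrightarrow> 0 \<le> p i N"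
  by (simp add: stoch_choice_def)

lemma stoch_choice_le_1: "stoch_choice X p \<Longrightarrow> menu X N \<Longrightarrow> i \<in> X \<Longrightarrow> p i N \<le> 1"
  by (simp add: stoch_choice_def)

lemma stoch_choice_sum: "stoch_choice X p \<Longrightarrow> menu X N \<Longrightarrow> (\<Sum>i\<in>N. p i N) = 1"
  by (simp add: stoch_choice_def)

lemma stoch_choice_pair:
  "stoch_choice X p \<Longrightarrow> i \<in> X \<Longrightarrow> j \<in> X \<Longrightarrow> i \<noteq> j \<Longrightarrow> p i {i, j} + p j {i, j} = 1"
  using stoch_choice_sum[of X p "{i, j}"] by (simp add: menu_def)

lemma stoch_choice_singleton: "stoch_choice X p \<Longrightarrow> i \<in> X \<Longrightarrow> p i {i} = 1"
  using stoch_choice_sum[of X p "{i}"] by (simp add: menu_def)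

lemma delta_swap: "delta p M j i = - delta p M i j"
  by (simp add: delta_def insert_commute)

lemma delta_self [simp]: "delta p M i i = 0"
  by (simp add: delta_def)

lemma delta_pair_menu [simp]: "delta p {i, j} i j = 0"
  by (simp add: delta_def)

lemma MSC_nonneg: "MSC X Q \<nu> \<Longrightarrow> menu X N \<Longrightarrow> i \<in> N \<Longrightarrow> j \<in> N \<Longrightarrow> 0 \<le> Q N i j"
  by (simp add: MSC_def)

lemma MSC_initial_distribution:
  "MSC X Q \<nu> \<Longrightarrow> menu X N \<Longrightarrow> (\<forall>i\<in>N. 0 \<le> \<nu> N i) \<and> (\<Sum>i\<in>N. \<nu> N i) = 1"
  by (simp add: MSC_def)

lemma MSC_diagonal:
  "MSC X Q \<nu> \<Longrightarrow> menu X N \<Longrightarrow> i \<in> N \<Longrightarrow> Q N i i = 1 - (\<Sum>k\<in>N - {i}. Q N i k)"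
  by (simp add: MSC_def)

lemma MSC_row_sum:
  assumes "MSC X Q \<nu>" "menu X N" "finite N" "i \<in> N"
  shows "(\<Sum>j\<in>N. Q N i j) = 1"
  using sum.remove[OF assms(3,4), of "Q N i"] MSC_diagonal[OF assms(1,2,4)] by simp

lemma MSC_pair_comparable:
  "MSC X Q \<nu> \<Longrightarrow> menu X N \<Longrightarrow> i \<in> N \<Longrightarrow> j \<in> N \<Longrightarrow> i \<noteq> j \<Longrightarrow>
   Q {i, j} i j = 0 \<Longrightarrow> 0 < Q {i, j} j i"
  unfolding MSC_def by blast

lemma MSC_consistent:
  "MSC X Q \<nu> \<Longrightarrow> menu X N \<Longrightarrow> i \<in> N \<Longrightarrow> j \<in> N \<Longrightarrow> i \<noteq> j \<Longrightarrow>
   Q {i, j} i j * Q N j i = Q {i, j} j i * Q N i j"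
  unfolding MSC_def by blast

lemma rationalized_stationary:
  assumes "finite X" "MSC X Q \<nu>" "rationalizes X Q \<nu> p" "menu X N" "j \<in> N"
  shows "(\<Sum>k\<in>N. p k N * Q N k j) = p j N"
proof (rule rho_is_imp_stationary[OF menu_finite[OF assms(1,4)]])
  show "rho_is N (\<nu> N) (Q N) (\<lambda>i. p i N)" using assms(3,4) by (simp add: rationalizes_def)
qed (use MSC_nonneg[OF assms(2,4)] MSC_initial_distribution[OF assms(2,4)]
       MSC_row_sum[OF assms(2,4) menu_finite[OF assms(1,4)]] assms(5) in auto)

text \<open>Stationarity on the binary menu combined with the consistency axiom.\<close>

lemma rationalized_detailed_balance:
  assumes "finite X" "menu X M" "MSC X Q \<nu>" "rationalizes X Q \<nu> p"
    and "i \<in> M" "j \<in> M" "i \<noteq> j"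
  shows "p j {i, j} * Q M j i = p i {i, j} * Q M i j"
proof -
  define T where "T = {i, j}"
  have "menu X T" unfolding T_def by (rule menu_pair[OF assms(2,5,6)])
  have "T - {j} = {i}" using assms(7) by (auto simp: T_def)
  hence diagonal: "Q T j j = 1 - Q T j i" using MSC_diagonal[OF assms(3) \<open>menu X T\<close>] by (simp add: T_def)
  have "p i T * Q T i j + p j T * Q T j j = p j T"
    using rationalized_stationary[OF assms(1,3,4) \<open>menu X T\<close>, of j] assms(7) by (simp add: T_def)
  hence pair_balance: "p i T * Q T i j = p j T * Q T j i" by (simp add: diagonal algebra_simps)
  have consistent: "Q T i j * Q M j i = Q T j i * Q M i j"
    unfolding T_def by (rule MSC_consistent[OF assms(3,2,5,6,7)])
  show ?thesis
  proof (cases "Q T i j = 0")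
    case True
    hence "0 < Q T j i" unfolding T_def by (rule MSC_pair_comparable[OF assms(3,2,5,6,7)])
    hence "p j T = 0" "Q M i j = 0" using True pair_balance consistent by auto
    thus ?thesis by (simp add: T_def)
  next
    case False
    have "Q T i j * (p j T * Q M j i) = Q T i j * (p i T * Q M i j)"
      using pair_balance consistent by (simp add: algebra_simps)
    thus ?thesis using False by (simp add: T_def)
  qed
qed

text \<open>By detailed balance the net flow p(k,M) q_kl - p(l,M) q_lk equals (q_kl + q_lk) \<delta>_kl(M),
  so stationarity makes the weighted \<delta> a circulation.\<close>

lemma rationalized_circulation:
  assumes "finite X" "stoch_choice X p" "menu X M" "MSC X Q \<nu>" "rationalizes X Q \<nu> p" "l \<in> M"
  shows "(\<Sum>k\<in>M. (Q M k l + Q M l k) * delta p M k l) = 0"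
proof -
  have flow: "(Q M k l + Q M l k) * delta p M k l = p k M * Q M k l - p l M * Q M l k"
    if "k \<in> M" for k
  proof (cases "k = l")
    case False
    have balance: "p l {k, l} * Q M l k - p k {k, l} * Q M k l = 0"
      using rationalized_detailed_balance[OF assms(1,3-5) that assms(6) False] by simp
    have "k \<in> X" "l \<in> X" using that assms(3,6) by (auto simp: menu_def)
    hence pair: "p k {k, l} = 1 - p l {k, l}" using stoch_choice_pair[OF assms(2) _ _ False] by simp
    have "(Q M k l + Q M l k) * delta p M k l - (p k M * Q M k l - p l M * Q M l k) =
          (p k M + p l M) * (p l {k, l} * Q M l k - p k {k, l} * Q M k l)"
      unfolding delta_def pair by (simp add: algebra_simps)
    thus ?thesis using balance by simp
  qed simp
  have "(\<Sum>k\<in>M. (Q M k l + Q M l k) * delta p M k l) =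
        (\<Sum>k\<in>M. p k M * Q M k l) - p l M * (\<Sum>k\<in>M. Q M l k)"
    by (simp add: flow sum_subtractf sum_distrib_left)
  also have "\<dots> = 0"
    using rationalized_stationary[OF assms(1,4,5,3,6)]
      MSC_row_sum[OF assms(4,3) menu_finite[OF assms(1,3)] assms(6)] by simp
  finally show ?thesis .
qed

lemma bounded_in_cycle_iff:
  "bounded_in_cycle p M i j \<longleftrightarrow>
     delta p M i j = 0 \<or> (\<exists>xs. sign_constant_cycle M (delta p M) xs \<and> (i, j) \<in> cycle_edges xs)"
  unfolding bounded_in_cycle_def is_cycle_on_def sign_constant_cycle_def cycle_edges_def by blast

lemma pairwise_comparable_imp_bounded_in_cycle:
  assumes "finite X" "stoch_choice X p" "menu X M" "MSC X Q \<nu>" "rationalizes X Q \<nu> p"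
    and "pairwise_comparable M (Q M)" and "i \<in> M" "j \<in> M" "i \<noteq> j"
  shows "bounded_in_cycle p M i j"
proof -
  define w where "w k l = Q M k l + Q M l k" for k l
  have w_sym: "w l k = w k l" for k l by (simp add: w_def)
  have w_nonneg: "0 \<le> w k l" if "k \<in> M" "l \<in> M" for k l
    using MSC_nonneg[OF assms(4,3)] that by (simp add: w_def)
  have "0 \<le> Q M i j" "0 \<le> Q M j i" using MSC_nonneg[OF assms(4,3)] assms(7,8) by auto
  moreover have "Q M i j = 0 \<Longrightarrow> 0 < Q M j i"
    using assms(6-9) by (simp add: pairwise_comparable_def)
  ultimately have w_pos: "0 < w i j" by (cases "Q M i j = 0") (auto simp: w_def)
  have circulation: "(\<Sum>k\<in>M. w k l * delta p M k l) = 0" if "l \<in> M" for l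
    unfolding w_def by (rule rationalized_circulation[OF assms(1-5) that])
  have "\<exists>xs. sign_constant_cycle M (delta p M) xs \<and> (i, j) \<in> cycle_edges xs"
    if "delta p M i j \<noteq> 0"
    by (rule circulation_edge_on_sign_constant_cycle[OF menu_finite[OF assms(1,3)] delta_swap w_sym
          w_nonneg circulation assms(7,8) that w_pos])
  thus ?thesis by (auto simp: bounded_in_cycle_iff)
qed

lemma fully_comparable_imp_choice_positive:
  assumes "finite X" "stoch_choice X p" "menu X M" "MSC X Q \<nu>" "rationalizes X Q \<nu> p"
    and "fully_comparable M (Q M)" and "j \<in> M"
  shows "0 < p j M"
proof (rule ccontr)
  have M: "finite M" "M \<subseteq> X" using menu_finite[OF assms(1,3)] assms(3) by (auto simp: menu_def)
  assume "\<not> 0 < p j M"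
  hence "p j M = 0" using stoch_choice_nonneg[OF assms(2,3), of j] assms(7) M(2) by auto
  hence "(\<Sum>k\<in>M. p k M * Q M k j) = 0" using rationalized_stationary[OF assms(1,4,5,3,7)] by simp
  moreover have "0 \<le> p k M * Q M k j" if "k \<in> M" for k
    using stoch_choice_nonneg[OF assms(2,3)] MSC_nonneg[OF assms(4,3) that assms(7)] that M(2) by auto
  ultimately have zero: "\<forall>k\<in>M. p k M * Q M k j = 0"
    using sum_nonneg_eq_0_iff[OF M(1), of "\<lambda>k. p k M * Q M k j"] by simp
  have "p k M = 0" if "k \<in> M" for k
  proof (cases "k = j")
    case False
    hence "0 < Q M k j" using assms(6,7) that by (simp add: fully_comparable_def)
    thus ?thesis using zero[rule_format, OF that] by auto
  qed (use \<open>p j M = 0\<close> in simp)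
  hence "(\<Sum>k\<in>M. p k M) = 0" by simp
  thus False using stoch_choice_sum[OF assms(2,3)] by simp
qed

lemma fully_comparable_imp_binary_choice_positive:
  assumes "finite X" "stoch_choice X p" "menu X M" "MSC X Q \<nu>" "rationalizes X Q \<nu> p"
    and "fully_comparable M (Q M)" and "i \<in> M" "j \<in> M"
  shows "0 < p i {i, j}"
proof (cases "i = j")
  case True thus ?thesis using stoch_choice_singleton[OF assms(2)] assms(3,7) by (auto simp: menu_def)
next
  case False
  have "i \<in> X" "j \<in> X" using assms(3,7,8) by (auto simp: menu_def)
  have "0 < Q M j i" using assms(6-8) False by (simp add: fully_comparable_def)
  moreover have "p j {i, j} * Q M j i = p i {i, j} * Q M i j"
    by (rule rationalized_detailed_balance[OF assms(1,3-5,7,8) False])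
  moreover have "p i {i, j} = 0 \<Longrightarrow> p j {i, j} = 1"
    using stoch_choice_pair[OF assms(2) \<open>i \<in> X\<close> \<open>j \<in> X\<close> False] by simp
  ultimately have "p i {i, j} \<noteq> 0" by auto
  thus ?thesis
    using stoch_choice_nonneg[OF assms(2) menu_pair[OF assms(3,7,8)] \<open>i \<in> X\<close>] by simp
qed

section \<open>Sufficiency\<close>

definition choice_chain ::
  "('a \<Rightarrow> 'a set \<Rightarrow> real) \<Rightarrow> ('a set \<Rightarrow> 'a \<Rightarrow> 'a \<Rightarrow> real) \<Rightarrow> 'a set \<Rightarrow> 'a \<Rightarrow> 'a \<Rightarrow> real" where
  "choice_chain p \<beta> N i j =
     (if i = j then 1 - (\<Sum>k\<in>N - {i}. \<beta> N i k * p k {i, k}) else \<beta> N i j * p j {i, j})"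

lemma choice_chain_flow:
  assumes "finite N" "j \<in> N" and \<beta>_sym: "\<And>k. k \<in> N \<Longrightarrow> \<beta> N k j = \<beta> N j k"
  shows "(\<Sum>k\<in>N. p k N * choice_chain p \<beta> N k j) = p j N + (\<Sum>k\<in>N. \<beta> N j k * delta p N k j)"
proof -
  let ?N' = "N - {j}"
  have "(\<Sum>k\<in>N. p k N * choice_chain p \<beta> N k j) =
        p j N * choice_chain p \<beta> N j j + (\<Sum>k\<in>?N'. p k N * choice_chain p \<beta> N k j)"
    using sum.remove[OF assms(1,2)] by simp
  also have "p j N * choice_chain p \<beta> N j j = p j N - (\<Sum>k\<in>?N'. \<beta> N j k * (p k {k, j} * p j N))"
    by (simp add: choice_chain_def right_diff_distrib sum_distrib_left mult_ac insert_commute)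
  also have "(\<Sum>k\<in>?N'. p k N * choice_chain p \<beta> N k j) = (\<Sum>k\<in>?N'. \<beta> N j k * (p k N * p j {k, j}))"
    using \<beta>_sym by (intro sum.cong) (auto simp: choice_chain_def)
  also have "(\<Sum>k\<in>N. \<beta> N j k * delta p N k j) = (\<Sum>k\<in>?N'. \<beta> N j k * delta p N k j)"
    using sum.remove[OF assms(1,2), of "\<lambda>k. \<beta> N j k * delta p N k j"] by simp
  ultimately show ?thesis
    by (simp add: delta_def right_diff_distrib sum_subtractf)
qed

lemma choice_chain_MSC:
  assumes sc: "stoch_choice X p"
    and \<beta>_nonneg: "\<And>N i j. menu X N \<Longrightarrow> i \<in> N \<Longrightarrow> j \<in> N \<Longrightarrow> 0 \<le> \<beta> N i j"
    and \<beta>_sym: "\<And>N i j. menu X N \<Longrightarrow> i \<in> N \<Longrightarrow> j \<in> N \<Longrightarrow> \<beta> N j i = \<beta> N i j"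
    and \<beta>_row: "\<And>N i. menu X N \<Longrightarrow> i \<in> N \<Longrightarrow> (\<Sum>k\<in>N - {i}. \<beta> N i k) < 1"
    and \<beta>_pair: "\<And>i j. i \<in> X \<Longrightarrow> j \<in> X \<Longrightarrow> i \<noteq> j \<Longrightarrow> 0 < \<beta> {i, j} i j"
  shows "MSC X (choice_chain p \<beta>) (\<lambda>N i. p i N)"
  unfolding MSC_def
proof (intro allI impI conjI ballI)
  fix N assume N: "menu X N"
  have "N \<subseteq> X" using N by (simp add: menu_def)
  show "0 \<le> p i N" if "i \<in> N" for i using stoch_choice_nonneg[OF sc N] that \<open>N \<subseteq> X\<close> by auto
  show "(\<Sum>i\<in>N. p i N) = 1" by (rule stoch_choice_sum[OF sc N])
  fix i assume i: "i \<in> N"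
  have "(\<Sum>k\<in>N - {i}. \<beta> N i k * p k {i, k}) \<le> (\<Sum>k\<in>N - {i}. \<beta> N i k)"
    using \<beta>_nonneg[OF N i] stoch_choice_le_1[OF sc menu_pair[OF N i]] i \<open>N \<subseteq> X\<close>
    by (intro sum_mono mult_left_le) auto
  hence stay: "0 < choice_chain p \<beta> N i i" using \<beta>_row[OF N i] by (simp add: choice_chain_def)
  show "0 < choice_chain p \<beta> N i i" by (fact stay)
  have "(\<Sum>k\<in>N - {i}. choice_chain p \<beta> N i k) = (\<Sum>k\<in>N - {i}. \<beta> N i k * p k {i, k})"
    by (rule sum.cong) (auto simp: choice_chain_def)
  thus "choice_chain p \<beta> N i i = 1 - (\<Sum>k\<in>N - {i}. choice_chain p \<beta> N i k)"
    by (simp add: choice_chain_def)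
  show "0 \<le> choice_chain p \<beta> N i j" if "j \<in> N" for j
    using stay \<beta>_nonneg[OF N i that] stoch_choice_nonneg[OF sc menu_pair[OF N i that]] that \<open>N \<subseteq> X\<close>
    by (cases "i = j") (auto simp: choice_chain_def)
  fix j assume j: "j \<in> N" and "i \<noteq> j"
  have "i \<in> X" "j \<in> X" using i j \<open>N \<subseteq> X\<close> by auto
  have pair_sym: "\<beta> {i, j} j i = \<beta> {i, j} i j"
    using \<beta>_sym[OF menu_pair[OF N i j]] by simp
  show "0 < choice_chain p \<beta> {i, j} j i" if "choice_chain p \<beta> {i, j} i j = 0"
    using that \<beta>_pair[OF \<open>i \<in> X\<close> \<open>j \<in> X\<close> \<open>i \<noteq> j\<close>] stoch_choice_pair[OF sc \<open>i \<in> X\<close> \<open>j \<in> X\<close> \<open>i \<noteq> j\<close>]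
      pair_sym \<open>i \<noteq> j\<close> by (auto simp: choice_chain_def insert_commute)
  show "choice_chain p \<beta> {i, j} i j * choice_chain p \<beta> N j i =
        choice_chain p \<beta> {i, j} j i * choice_chain p \<beta> N i j"
    using pair_sym \<beta>_sym[OF N i j] \<open>i \<noteq> j\<close> by (simp add: choice_chain_def insert_commute)
qed

lemma choice_chain_rationalizes:
  assumes "finite X"
    and \<beta>_sym: "\<And>N i j. menu X N \<Longrightarrow> i \<in> N \<Longrightarrow> j \<in> N \<Longrightarrow> \<beta> N j i = \<beta> N i j"
    and balanced: "\<And>N j. menu X N \<Longrightarrow> j \<in> N \<Longrightarrow> (\<Sum>k\<in>N. \<beta> N j k * delta p N k j) = 0"
  shows "rationalizes X (choice_chain p \<beta>) (\<lambda>N i. p i N) p"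
  unfolding rationalizes_def
proof (intro allI impI)
  fix N assume N: "menu X N"
  show "rho_is N (\<lambda>i. p i N) (choice_chain p \<beta> N) (\<lambda>i. p i N)"
  proof (rule stationary_imp_rho_is[OF menu_finite[OF assms(1) N]])
    show "(\<Sum>k\<in>N. p k N * choice_chain p \<beta> N k j) = p j N" if "j \<in> N" for j
      using choice_chain_flow[OF menu_finite[OF assms(1) N] that, of \<beta> p] \<beta>_sym[OF N _ that]
        balanced[OF N that] by simp
  qed
qed

lemma choice_chain_pairwise_comparable:
  assumes "stoch_choice X p" "M \<subseteq> X"
    and \<beta>_pos: "\<And>i j. i \<in> M \<Longrightarrow> j \<in> M \<Longrightarrow> i \<noteq> j \<Longrightarrow> 0 < \<beta> M i j"
    and \<beta>_sym: "\<And>i j. i \<in> M \<Longrightarrow> j \<in> M \<Longrightarrow> \<beta> M j i = \<beta> M i j"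
  shows "pairwise_comparable M (choice_chain p \<beta> M)"
  unfolding pairwise_comparable_def
proof (intro ballI impI)
  fix i j assume ij: "i \<in> M" "j \<in> M" "i \<noteq> j" and "choice_chain p \<beta> M i j = 0"
  hence "p j {i, j} = 0" using \<beta>_pos[OF ij] by (simp add: choice_chain_def)
  hence "p i {i, j} = 1" using stoch_choice_pair[OF assms(1) _ _ ij(3)] ij(1,2) assms(2) by auto
  thus "0 < choice_chain p \<beta> M j i"
    using \<beta>_pos[OF ij] \<beta>_sym[OF ij(1,2)] ij(3) by (simp add: choice_chain_def insert_commute)
qed

lemma choice_chain_fully_comparable:
  assumes \<beta>_pos: "\<And>i j. i \<in> M \<Longrightarrow> j \<in> M \<Longrightarrow> i \<noteq> j \<Longrightarrow> 0 < \<beta> M i j"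
    and binary_positive: "\<forall>i\<in>M. \<forall>j\<in>M. 0 < p i {i, j}"
  shows "fully_comparable M (choice_chain p \<beta> M)"
  unfolding fully_comparable_def
proof (intro ballI impI)
  fix i j assume ij: "i \<in> M" "j \<in> M" "i \<noteq> j"
  have "0 < p j {i, j}" using binary_positive[rule_format, of j i] ij by (simp add: insert_commute)
  thus "0 < choice_chain p \<beta> M i j" using \<beta>_pos[OF ij] ij(3) by (simp add: choice_chain_def)
qed

text \<open>Rates c w on M make p(\<cdot>,M) stationary; rate 1/2 on binary menus is harmless because
  \<delta> vanishes there, and on all other menus the chain stays put.\<close>

definition menu_rates :: "'a set \<Rightarrow> real \<Rightarrow> ('a \<Rightarrow> 'a \<Rightarrow> real) \<Rightarrow> 'a set \<Rightarrow> 'a \<Rightarrow> 'a \<Rightarrow> real" where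
  "menu_rates M c w N i j = (if N = M then c * w i j else if card N = 2 then 1 / 2 else 0)"

lemma menu_rates_row_sum:
  assumes "finite N" "i \<in> N" "finite M" and w_nonneg: "\<And>k l. k \<in> M \<Longrightarrow> l \<in> M \<Longrightarrow> 0 \<le> w k l"
    and "0 \<le> c" "c * (\<Sum>k\<in>M. \<Sum>l\<in>M. w k l) < 1"
  shows "(\<Sum>k\<in>N - {i}. menu_rates M c w N i k) < 1"
proof -
  consider "N = M" | "N \<noteq> M" "card N = 2" | "N \<noteq> M" "card N \<noteq> 2" by blast
  thus ?thesis
  proof cases
    case 1
    have "(\<Sum>k\<in>N - {i}. menu_rates M c w N i k) = c * (\<Sum>k\<in>M - {i}. w i k)"
      using 1 by (simp add: menu_rates_def sum_distrib_left)
    also have "\<dots> \<le> c * (\<Sum>k\<in>M. w i k)"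
      using 1 assms(2,3,5) w_nonneg by (intro mult_left_mono sum_mono2) auto
    also have "\<dots> \<le> c * (\<Sum>k\<in>M. \<Sum>l\<in>M. w k l)"
      using 1 assms(2,3,5) w_nonneg
      by (intro mult_left_mono member_le_sum[of i M "\<lambda>k. \<Sum>l\<in>M. w k l"] sum_nonneg) auto
    finally show ?thesis using assms(6) by simp
  next
    case 2
    hence "card (N - {i}) = 1" using assms(1,2) by simp
    then obtain k where "N - {i} = {k}" by (rule card_1_singletonE)
    thus ?thesis using 2 by (simp add: menu_rates_def)
  qed (simp add: menu_rates_def)
qed

lemma menu_rates_balanced:
  assumes "j \<in> N" and w_sym: "\<And>k l. k \<in> M \<Longrightarrow> l \<in> M \<Longrightarrow> w l k = w k l"
    and circulation: "\<And>l. l \<in> M \<Longrightarrow> (\<Sum>k\<in>M. w k l * delta p M k l) = 0"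
  shows "(\<Sum>k\<in>N. menu_rates M c w N j k * delta p N k j) = 0"
proof -
  consider "N = M" | "N \<noteq> M" "card N = 2" | "N \<noteq> M" "card N \<noteq> 2" by blast
  thus ?thesis
  proof cases
    case 1
    have "(\<Sum>k\<in>N. menu_rates M c w N j k * delta p N k j) = c * (\<Sum>k\<in>M. w k j * delta p M k j)"
      using 1 w_sym assms(1) by (simp add: menu_rates_def sum_distrib_left mult.assoc)
    thus ?thesis using circulation 1 assms(1) by simp
  next
    case 2
    have "delta p N k j = 0" if "k \<in> N" for k
    proof (cases "k = j")
      case False
      hence "N = {k, j}" using 2 \<open>k \<in> N\<close> \<open>j \<in> N\<close> by (auto simp: card_2_iff)
      thus ?thesis by simp
    qed simp
    thus ?thesis by simp
  qed (simp add: menu_rates_def)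
qed

lemma circulation_weights_imp_MSC:
  assumes "finite X" "stoch_choice X p" "menu X M"
    and w_sym: "\<And>k l. k \<in> M \<Longrightarrow> l \<in> M \<Longrightarrow> w l k = w k l"
    and w_nonneg: "\<And>k l. k \<in> M \<Longrightarrow> l \<in> M \<Longrightarrow> 0 \<le> w k l"
    and w_pos: "\<And>k l. k \<in> M \<Longrightarrow> l \<in> M \<Longrightarrow> k \<noteq> l \<Longrightarrow> 0 < w k l"
    and circulation: "\<And>l. l \<in> M \<Longrightarrow> (\<Sum>k\<in>M. w k l * delta p M k l) = 0"
  shows "\<exists>Q \<nu>. MSC X Q \<nu> \<and> rationalizes X Q \<nu> p \<and> pairwise_comparable M (Q M) \<and>
           ((\<forall>i\<in>M. \<forall>j\<in>M. 0 < p i {i, j}) \<longrightarrow> fully_comparable M (Q M))"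
proof -
  define S where "S = (\<Sum>k\<in>M. \<Sum>l\<in>M. w k l)"
  define c where "c = 1 / (1 + S)"
  have "0 \<le> S" unfolding S_def using w_nonneg by (intro sum_nonneg) auto
  hence "0 < c" "c * S < 1" by (simp_all add: c_def field_simps)
  let ?\<beta> = "menu_rates M c w"
  have "MSC X (choice_chain p ?\<beta>) (\<lambda>N i. p i N)"
  proof (rule choice_chain_MSC[OF assms(2)])
    show "0 \<le> ?\<beta> N i j" if "menu X N" "i \<in> N" "j \<in> N" for N i j
      using w_nonneg[of i j] \<open>0 < c\<close> that by (auto simp: menu_rates_def)
    show "?\<beta> N j i = ?\<beta> N i j" if "menu X N" "i \<in> N" "j \<in> N" for N i j
      using w_sym[of i j] that by (auto simp: menu_rates_def)
    show "(\<Sum>k\<in>N - {i}. ?\<beta> N i k) < 1" if "menu X N" "i \<in> N" for N i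
      using menu_rates_row_sum[OF menu_finite[OF assms(1) that(1)] that(2) menu_finite[OF assms(1,3)]
          w_nonneg] \<open>0 < c\<close> \<open>c * S < 1\<close> by (simp add: S_def)
    show "0 < ?\<beta> {i, j} i j" if "i \<in> X" "j \<in> X" "i \<noteq> j" for i j
      using w_pos[of i j] \<open>0 < c\<close> that by (auto simp: menu_rates_def)
  qed
  moreover have "rationalizes X (choice_chain p ?\<beta>) (\<lambda>N i. p i N) p"
  proof (rule choice_chain_rationalizes[OF assms(1)])
    show "?\<beta> N j i = ?\<beta> N i j" if "menu X N" "i \<in> N" "j \<in> N" for N i j
      using w_sym[of i j] that by (auto simp: menu_rates_def)
    show "(\<Sum>k\<in>N. ?\<beta> N j k * delta p N k j) = 0" if "menu X N" "j \<in> N" for N j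
      by (rule menu_rates_balanced[OF that(2) w_sym circulation])
  qed
  moreover have \<beta>_pos: "0 < ?\<beta> M i j" if "i \<in> M" "j \<in> M" "i \<noteq> j" for i j
    using w_pos[OF that] \<open>0 < c\<close> by (simp add: menu_rates_def)
  have "pairwise_comparable M (choice_chain p ?\<beta> M)"
  proof (rule choice_chain_pairwise_comparable[where \<beta> = ?\<beta>, OF assms(2) _ \<beta>_pos])
    show "M \<subseteq> X" using assms(3) by (simp add: menu_def)
    show "?\<beta> M j i = ?\<beta> M i j" if "i \<in> M" "j \<in> M" for i j
      using w_sym[OF that] by (simp add: menu_rates_def)
  qed
  moreover have "(\<forall>i\<in>M. \<forall>j\<in>M. 0 < p i {i, j}) \<longrightarrow> fully_comparable M (choice_chain p ?\<beta> M)"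
    using choice_chain_fully_comparable[where \<beta> = ?\<beta>, OF \<beta>_pos] by blast
  ultimately show ?thesis by blast
qed

lemma bounded_in_cycle_imp_MSC:
  assumes "finite X" "stoch_choice X p" "menu X M"
    and bounded: "\<forall>i\<in>M. \<forall>j\<in>M. i \<noteq> j \<longrightarrow> bounded_in_cycle p M i j"
  shows "\<exists>Q \<nu>. MSC X Q \<nu> \<and> rationalizes X Q \<nu> p \<and> pairwise_comparable M (Q M) \<and>
           ((\<forall>i\<in>M. \<forall>j\<in>M. 0 < p i {i, j}) \<longrightarrow> fully_comparable M (Q M))"
proof -
  have "\<exists>xs. sign_constant_cycle M (delta p M) xs \<and> (a, b) \<in> cycle_edges xs"
    if "a \<in> M" "b \<in> M" "delta p M a b \<noteq> 0" for a b
    using bounded that by (cases "a = b") (auto simp: bounded_in_cycle_iff)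
  then obtain w where
    w: "\<forall>k\<in>M. \<forall>l\<in>M. w l k = w k l \<and> 0 \<le> w k l \<and> (k \<noteq> l \<longrightarrow> 0 < w k l)" and
    circulation: "\<forall>l\<in>M. (\<Sum>k\<in>M. w k l * delta p M k l) = 0"
    using exists_positive_circulation_weights[of M "delta p M", OF menu_finite[OF assms(1,3)] delta_swap]
    by blast
  show ?thesis by (rule circulation_weights_imp_MSC[OF assms(1-3), of w]) (use w circulation in auto)
qed

theorem theorem2:
  fixes X :: "'a set" and p :: "'a \<Rightarrow> 'a set \<Rightarrow> real" and M :: "'a set"
  assumes "finite X" and "stoch_choice X p" and "menu X M"
  shows "((\<exists>Q \<nu>. MSC X Q \<nu> \<and> rationalizes X Q \<nu> p \<and> pairwise_comparable M (Q M)) \<longleftrightarrow>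
            (\<forall>i\<in>M. \<forall>j\<in>M. i \<noteq> j \<longrightarrow> bounded_in_cycle p M i j))
       \<and> ((\<exists>Q \<nu>. MSC X Q \<nu> \<and> rationalizes X Q \<nu> p \<and> fully_comparable M (Q M)) \<longleftrightarrow>
            ((\<forall>i\<in>M. p i M > 0) \<and> (\<forall>i\<in>M. \<forall>j\<in>M. p i {i, j} > 0) \<and>
             (\<forall>i\<in>M. \<forall>j\<in>M. i \<noteq> j \<longrightarrow> bounded_in_cycle p M i j)))"
proof (rule conjI; rule iffI)
  assume "\<exists>Q \<nu>. MSC X Q \<nu> \<and> rationalizes X Q \<nu> p \<and> pairwise_comparable M (Q M)"
  then obtain Q \<nu> where Q: "MSC X Q \<nu>" "rationalizes X Q \<nu> p" "pairwise_comparable M (Q M)"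
    by blast
  show "\<forall>i\<in>M. \<forall>j\<in>M. i \<noteq> j \<longrightarrow> bounded_in_cycle p M i j"
    using pairwise_comparable_imp_bounded_in_cycle[OF assms Q] by blast
next
  assume "\<forall>i\<in>M. \<forall>j\<in>M. i \<noteq> j \<longrightarrow> bounded_in_cycle p M i j"
  from bounded_in_cycle_imp_MSC[OF assms this] obtain Q \<nu>
    where "MSC X Q \<nu>" "rationalizes X Q \<nu> p" "pairwise_comparable M (Q M)" by blast
  thus "\<exists>Q \<nu>. MSC X Q \<nu> \<and> rationalizes X Q \<nu> p \<and> pairwise_comparable M (Q M)" by blast
next
  assume "\<exists>Q \<nu>. MSC X Q \<nu> \<and> rationalizes X Q \<nu> p \<and> fully_comparable M (Q M)"
  then obtain Q \<nu> where Q: "MSC X Q \<nu>" "rationalizes X Q \<nu> p" "fully_comparable M (Q M)"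
    by blast
  hence "pairwise_comparable M (Q M)"
    by (simp add: fully_comparable_def pairwise_comparable_def)
  thus "(\<forall>i\<in>M. p i M > 0) \<and> (\<forall>i\<in>M. \<forall>j\<in>M. p i {i, j} > 0) \<and>
        (\<forall>i\<in>M. \<forall>j\<in>M. i \<noteq> j \<longrightarrow> bounded_in_cycle p M i j)"
    using fully_comparable_imp_choice_positive[OF assms Q]
      fully_comparable_imp_binary_choice_positive[OF assms Q]
      pairwise_comparable_imp_bounded_in_cycle[OF assms Q(1,2)] by simp
next
  assume "(\<forall>i\<in>M. p i M > 0) \<and> (\<forall>i\<in>M. \<forall>j\<in>M. p i {i, j} > 0) \<and>
          (\<forall>i\<in>M. \<forall>j\<in>M. i \<noteq> j \<longrightarrow> bounded_in_cycle p M i j)"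
  hence "\<forall>i\<in>M. \<forall>j\<in>M. p i {i, j} > 0" "\<forall>i\<in>M. \<forall>j\<in>M. i \<noteq> j \<longrightarrow> bounded_in_cycle p M i j"
    by blast+
  with bounded_in_cycle_imp_MSC[OF assms] obtain Q \<nu>
    where "MSC X Q \<nu>" "rationalizes X Q \<nu> p" "fully_comparable M (Q M)" by blast
  thus "\<exists>Q \<nu>. MSC X Q \<nu> \<and> rationalizes X Q \<nu> p \<and> fully_comparable M (Q M)" by blast
qed

end
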